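(* Let $n\ge 1$, $V=(\mathbb{Z}/2\mathbb{Z})^n$ with standard basis $e_1,\dots,e_n$ and standard inner product $\langle (x_i),(y_i)\rangle=\sum_i x_iy_i$, and let $\mathcal{O}$ be the group of linear automorphisms of $V$ preserving this inner product. For integers $k\ge 1$ and $1\le i_1<i_2<\cdots<i_{2k}\le n$, let $R(i_1,\dots,i_{2k})$ be the linear map of $V$ defined by $R(e_{i_j})=\sum_{l\neq j}e_{i_l}$ for $1\le j\le 2k$ (sum over $l\in\{1,\dots,2k\}\setminus\{j\}$) and $R(e_m)=e_m$ for $m\notin\{i_1,\dots,i_{2k}\}$. Then each $R(i_1,\dots,i_{2k})$ is an involution in $\mathcal{O}$, and $\mathcal{O}$ is generated by the set of all such involutions $R(i_1,\dots,i_{2k})$. *)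

theory Defs
  imports "HOL-Analysis.Analysis" "HOL-Library.Z2"
begin

text \<open>V = (Z/2Z)^n is modelled as bit ^ 'n for a finite index type 'n with CARD('n) = n
  (n \<ge> 1 is automatic). The standard basis vector e_i is axis i 1.\<close>

definition ip :: "bit ^ 'n::finite \<Rightarrow> bit ^ 'n \<Rightarrow> bit" where
  "ip x y = (\<Sum>i\<in>UNIV. x $ i * y $ i)"

definition lin_map :: "(bit ^ 'n::finite \<Rightarrow> bit ^ 'n) \<Rightarrow> bool" where
  "lin_map f \<longleftrightarrow> (\<forall>x y. f (x + y) = f x + f y) \<and> (\<forall>c x. f (c *s x) = c *s f x)"

definition orth_group :: "(bit ^ 'n::finite \<Rightarrow> bit ^ 'n) set" where
  "orth_group = {f. bij f \<and> lin_map f \<and> (\<forall>x y. ip (f x) (f y) = ip x y)}"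

text \<open>R(i_1,...,i_2k) for the index set S = {i_1,...,i_2k}: the linear map with
  e_i \<mapsto> sum of e_l over l \<in> S - {i} for i \<in> S, and e_m \<mapsto> e_m otherwise.\<close>
definition R_img :: "'n::finite set \<Rightarrow> 'n \<Rightarrow> bit ^ 'n" where
  "R_img S i = (if i \<in> S then (\<Sum>l\<in>S - {i}. axis l 1) else axis i 1)"

definition R_map :: "'n::finite set \<Rightarrow> bit ^ 'n \<Rightarrow> bit ^ 'n" where
  "R_map S x = (\<Sum>i\<in>UNIV. x $ i *s R_img S i)"

inductive_set gen_group :: "('a \<Rightarrow> 'a) set \<Rightarrow> ('a \<Rightarrow> 'a) set" for G where
  gen_id: "id \<in> gen_group G"
| gen_gen: "g \<in> G \<Longrightarrow> g \<in> gen_group G"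
| gen_comp: "f \<in> gen_group G \<Longrightarrow> g \<in> gen_group G \<Longrightarrow> f \<circ> g \<in> gen_group G"
| gen_inv: "f \<in> gen_group G \<Longrightarrow> inv f \<in> gen_group G"

end

theory Submission imports Defs begin

text \<open>
  For an isotropic vector \<open>v\<close>, i.e. \<open>\<langle>v, v\<rangle> = 0\<close>, the transvection \<open>x \<mapsto> x + \<langle>x, v\<rangle> v\<close> is an
  orthogonal involution, and \<open>R(S)\<close> is the transvection of the indicator vector of \<open>S\<close>, which is
  isotropic exactly because \<open>|S|\<close> is even. Since every isotropic vector is such an indicator
  vector, it suffices to write an orthogonal map \<open>f\<close> as a product of transvections.
  If \<open>f\<close> moves \<open>e\<^sub>i\<close>, at most two transvections bring \<open>f e\<^sub>i\<close> back to \<open>e\<^sub>i\<close> while fixing every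
  basis vector that \<open>f\<close> fixes: when \<open>\<langle>f e\<^sub>i, e\<^sub>i\<rangle> = 0\<close> the transvection of \<open>f e\<^sub>i + e\<^sub>i\<close> does it,
  and otherwise a transvection of \<open>e\<^sub>i + e\<^sub>k\<close>, for a suitable moved index \<open>k\<close>, first reduces to
  that case. Induction on the number of moved basis vectors concludes.
\<close>

(* Keep bit arithmetic in ring form (not xor/and), so that algebra_simps applies. *)
declare add_bit_eq_xor [simp del] mult_bit_eq_and [simp del]

lemma bit_add_self [simp]: "(b::bit) + b = 0"
  by (cases b) auto

lemma bit_mult_self [simp]: "(b::bit) * b = b"
  by (cases b) auto

lemma of_nat_bit_eq_0_iff: "(of_nat n :: bit) = 0 \<longleftrightarrow> even n"
  by (induction n) auto

abbreviation e :: "'n::finite \<Rightarrow> bit ^ 'n" where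
  "e i \<equiv> axis i 1"

lemma axis_component: "axis i (1::bit) $ j = (if j = i then 1 else 0)"
  unfolding axis_def by simp

lemma ip_commute: "ip x y = ip y x"
  unfolding ip_def by (simp only: mult.commute)

lemma ip_add_left: "ip (x + y) z = ip x z + ip y z"
  unfolding ip_def by (simp only: vector_add_component distrib_right sum.distrib)

lemma ip_add_right: "ip z (x + y) = ip z x + ip z y"
  unfolding ip_def by (simp only: vector_add_component distrib_left sum.distrib)

lemma ip_smult_left: "ip (c *s x) y = c * ip x y"
  unfolding ip_def by (simp only: vector_smult_component sum_distrib_left mult.assoc)

lemma ip_smult_right: "ip y (c *s x) = c * ip y x"
  unfolding ip_def by (simp only: vector_smult_component sum_distrib_left mult.left_commute)

lemma ip_axis_right: "ip x (e j) = x $ j"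
  unfolding ip_def axis_def by (simp add: if_distrib cong: if_cong)

lemma ip_axis_left: "ip (e j) x = x $ j"
  using ip_axis_right ip_commute by metis

lemma ip_axis_self: "ip (e i) (e i) = 1"
  by (simp add: ip_axis_right axis_component)

lemma ip_indicator_right: "ip x (\<chi> i. indicator S i) = (\<Sum>i\<in>S. x $ i)"
  unfolding ip_def by (simp add: sum_mult_indicator)

lemma ip_indicator_self: "ip (\<chi> i. indicator S i) (\<chi> i. indicator S i) = of_nat (card S)"
  unfolding ip_indicator_right by (simp add: indicator_def)

lemma indicator_support: "(\<chi> i. indicator {i. v $ i = 1} i) = (v :: bit ^ 'n::finite)"
  by (auto simp: vec_eq_iff indicator_def bit_not_one_iff)

lemma isotropic_add: "ip u u = ip v v \<Longrightarrow> ip (u + v) (u + v) = 0"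
  by (simp add: ip_add_left ip_add_right ip_commute[of v u] add.assoc)

definition transvection :: "bit ^ 'n::finite \<Rightarrow> bit ^ 'n \<Rightarrow> bit ^ 'n" where
  "transvection v x = x + ip x v *s v"

lemma transvection_orthogonal: "ip x v = 0 \<Longrightarrow> transvection v x = x"
  unfolding transvection_def by simp

lemma transvection_add: "transvection v (x + y) = transvection v x + transvection v y"
  unfolding transvection_def by (simp add: vec_eq_iff ip_add_left algebra_simps)

lemma transvection_smult: "transvection v (c *s x) = c *s transvection v x"
  unfolding transvection_def by (simp add: vec_eq_iff ip_smult_left algebra_simps)

lemma transvection_ip:
  assumes "ip v v = 0"
  shows "ip (transvection v x) (transvection v y) = ip x y"
proof -
  have "ip (transvection v x) (transvection v y)
      = ip x y + ip y v * ip x v + ip x v * ip v y + ip x v * ip y v * ip v v"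
    unfolding transvection_def
    by (simp add: ip_add_left ip_add_right ip_smult_left ip_smult_right algebra_simps)
  also have "\<dots> = ip x y"
    using assms by (simp add: ip_commute[of v y] mult.commute)
  finally show ?thesis .
qed

lemma transvection_involution:
  assumes "ip v v = 0"
  shows "transvection v \<circ> transvection v = id"
proof
  fix x
  have "transvection v (transvection v x) = x + (ip x v + ip x v + ip x v * ip v v) *s v"
    unfolding transvection_def by (simp add: vec_eq_iff ip_add_left ip_smult_left algebra_simps)
  then show "(transvection v \<circ> transvection v) x = id x"
    using assms by (simp add: vec_eq_iff)
qed

lemma transvection_in_orth_group:
  assumes "ip v v = 0"
  shows "transvection v \<in> orth_group"
  unfolding orth_group_def lin_map_def
  using o_bij[OF transvection_involution[OF assms] transvection_involution[OF assms]]
    transvection_add transvection_smult transvection_ip[OF assms]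
  by blast

lemma transvection_add_maps:
  assumes "ip u u = 1" "ip u v = 0"
  shows "transvection (u + v) u = v"
  unfolding transvection_def using assms
  by (simp add: ip_add_right vec_eq_iff add.assoc[symmetric])

lemma R_img_eq_transvection: "R_img S i = transvection (\<chi> j. indicator S j) (e i)"
  unfolding R_img_def transvection_def ip_axis_left
  by (auto simp: vec_eq_iff axis_component indicator_def sum.If_cases)

lemma R_map_eq_transvection: "R_map S = transvection (\<chi> j. indicator S j)"
proof
  fix x
  let ?v = "(\<chi> j. indicator S j) :: bit ^ _"
  have "R_map S x = (\<Sum>i\<in>UNIV. x $ i *s e i) + (\<Sum>i\<in>UNIV. (x $ i * ?v $ i) *s ?v)"
    unfolding R_map_def R_img_eq_transvection transvection_def ip_axis_left
    by (simp only: vector_add_ldistrib vector_smult_assoc sum.distrib)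
  also have "(\<Sum>i\<in>UNIV. (x $ i * ?v $ i) *s ?v) = ip x ?v *s ?v"
    unfolding ip_def by (simp add: vec_eq_iff sum_component sum_distrib_right)
  finally show "R_map S x = transvection ?v x"
    unfolding basis_expansion transvection_def .
qed

lemma orth_group_ip: "f \<in> orth_group \<Longrightarrow> ip (f x) (f y) = ip x y"
  unfolding orth_group_def by blast

lemma id_in_orth_group: "id \<in> orth_group"
  unfolding orth_group_def lin_map_def by simp

lemma comp_in_orth_group:
  assumes "f \<in> orth_group" "g \<in> orth_group"
  shows "f \<circ> g \<in> orth_group"
  using assms unfolding orth_group_def lin_map_def by (simp add: bij_comp)

lemma inv_in_orth_group:
  assumes "f \<in> orth_group"
  shows "inv f \<in> orth_group"
proof -
  have f: "bij f" "lin_map f" "\<And>x y. ip (f x) (f y) = ip x y"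
    using assms unfolding orth_group_def by blast+
  have f_inv: "f (inv f x) = x" "inv f (f x) = x" for x
    using f(1) by (simp_all add: bij_is_surj surj_f_inv_f bij_is_inj)
  have "inv f (x + y) = inv f x + inv f y" for x y
    using f(2) f_inv unfolding lin_map_def by metis
  moreover have "inv f (c *s x) = c *s inv f x" for c x
    using f(2) f_inv unfolding lin_map_def by metis
  moreover have "ip (inv f x) (inv f y) = ip x y" for x y
    using f(3)[of "inv f x" "inv f y"] f_inv by simp
  ultimately show ?thesis
    unfolding orth_group_def lin_map_def using bij_imp_bij_inv[OF f(1)] by blast
qed

lemma gen_group_minimal:
  assumes "G \<subseteq> H" "id \<in> H" "\<And>f g. f \<in> H \<Longrightarrow> g \<in> H \<Longrightarrow> f \<circ> g \<in> H"
    "\<And>f. f \<in> H \<Longrightarrow> inv f \<in> H"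
  shows "gen_group G \<subseteq> H"
proof
  show "f \<in> H" if "f \<in> gen_group G" for f
    using that by induction (use assms in blast)+
qed

lemma orth_group_component_fixed:
  assumes "f \<in> orth_group" "f (e j) = e j"
  shows "f x $ j = x $ j"
  using orth_group_ip[OF assms(1), of x "e j"] assms(2) by (simp add: ip_axis_right)

lemma orth_group_eq_id:
  assumes "f \<in> orth_group" "\<And>j. f (e j) = e j"
  shows "f = id"
  using orth_group_component_fixed[OF assms(1) assms(2)] by (simp add: fun_eq_iff vec_eq_iff)

lemma isotropic_indicator_iff:
  "ip (\<chi> i. indicator S i) (\<chi> i. indicator S i) = 0 \<longleftrightarrow> even (card S)"
  by (simp add: ip_indicator_self of_nat_bit_eq_0_iff)

lemma R_map_in_orth_group: "even (card S) \<Longrightarrow> R_map S \<in> orth_group"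
  by (simp add: R_map_eq_transvection transvection_in_orth_group isotropic_indicator_iff)

lemma R_map_involution: "even (card S) \<Longrightarrow> R_map S \<circ> R_map S = id"
  by (simp add: R_map_eq_transvection transvection_involution isotropic_indicator_iff)

abbreviation R_generators :: "(bit ^ 'n::finite \<Rightarrow> bit ^ 'n) set" where
  "R_generators \<equiv> {R_map S | S::'n set. S \<noteq> {} \<and> even (card S)}"

lemma gen_group_R_generators_subset: "gen_group R_generators \<subseteq> orth_group"
  by (rule gen_group_minimal)
    (auto simp: R_map_in_orth_group id_in_orth_group comp_in_orth_group inv_in_orth_group)

lemma transvection_in_gen_group:
  assumes "ip v v = 0"
  shows "transvection v \<in> gen_group R_generators"
proof (cases "v = 0")
  case True
  then have "transvection v = id"
    by (simp add: fun_eq_iff transvection_def)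
  then show ?thesis by (simp add: gen_group.gen_id)
next
  case False
  define S where "S = {i. v $ i = 1}"
  have v: "v = (\<chi> i. indicator S i)"
    unfolding S_def indicator_support ..
  have "S \<noteq> {}"
    using False unfolding S_def by (auto simp: vec_eq_iff bit_not_zero_iff)
  moreover have "even (card S)"
    using assms isotropic_indicator_iff v by metis
  ultimately have "R_map S \<in> R_generators"
    by blast
  then show ?thesis
    unfolding v R_map_eq_transvection[symmetric] by (rule gen_group.gen_gen)
qed

lemma exists_transvection_to_basis:
  assumes f: "f \<in> orth_group" and "f (e i) $ i = 0"
  obtains v where "ip v v = 0" "transvection v (f (e i)) = e i"
    "\<forall>j. f (e j) = e j \<longrightarrow> transvection v (e j) = e j"
proof
  let ?u = "f (e i)"
  have "ip ?u ?u = 1"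
    using orth_group_ip[OF f] ip_axis_self by metis
  then show "ip (?u + e i) (?u + e i) = 0" "transvection (?u + e i) ?u = e i"
    using assms(2) by (simp_all add: isotropic_add ip_axis_self transvection_add_maps ip_axis_right)
  show "\<forall>j. f (e j) = e j \<longrightarrow> transvection (?u + e i) (e j) = e j"
    using orth_group_component_fixed[OF f]
    by (simp add: transvection_orthogonal ip_axis_left)
qed

lemma exists_moved_index:
  assumes f: "f \<in> orth_group" and moved: "f (e i) \<noteq> e i" and "f (e i) $ i = 1"
  obtains k where "k \<noteq> i" "f (e k) \<noteq> e k" "f (e i) $ k = 0"
proof -
  let ?u = "f (e i)"
  have "\<exists>k. k \<noteq> i \<and> f (e k) \<noteq> e k \<and> ?u $ k = 0"
  proof (rule ccontr)
    assume contra: "\<not> ?thesis"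
    have u_moved: "?u $ l = 1" if "f (e l) \<noteq> e l" for l
      using contra that assms(3) bit_not_zero_iff by metis
    have u_fixed: "?u $ l = 0" if "f (e l) = e l" for l
      using orth_group_component_fixed[OF f that] that moved by (auto simp: axis_component)
    obtain k where k: "?u $ k \<noteq> e i $ k"
      using moved by (auto simp: vec_eq_iff)
    then have "k \<noteq> i"
      using assms(3) by auto
    then have k_moved: "f (e k) \<noteq> e k"
      using k u_fixed by (auto simp: axis_component)
    let ?w = "f (e k)"
    text \<open>\<open>?w\<close> vanishes at the fixed indices, where \<open>?u\<close> vanishes too, and \<open>?u\<close> is 1 elsewhere.\<close>
    have agree: "?w $ l * ?u $ l = ?w $ l * ?w $ l" for l
    proof (cases "f (e l) = e l")
      case True
      then show ?thesis
        using orth_group_component_fixed[OF f True, of "e k"] k_moved by (auto simp: axis_component)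
    qed (simp add: u_moved)
    have "ip ?w ?u = ip ?w ?w"
      unfolding ip_def by (rule sum.cong[OF refl agree])
    moreover have "ip ?w ?u = 0"
      using orth_group_ip[OF f] \<open>k \<noteq> i\<close> by (simp add: ip_axis_right axis_component)
    moreover have "ip ?w ?w = 1"
      using orth_group_ip[OF f] ip_axis_self by metis
    ultimately show False by simp
  qed
  then show thesis
    using that by blast
qed

lemma exists_gen_group_fixing_basis:
  assumes f: "f \<in> orth_group" and moved: "f (e i) \<noteq> e i"
  obtains r where "r \<in> gen_group R_generators" "r (f (e i)) = e i"
    "\<forall>j. f (e j) = e j \<longrightarrow> r (e j) = e j"
proof (cases "f (e i) $ i = 0")
  case True
  then obtain v where "ip v v = 0" "transvection v (f (e i)) = e i"
    "\<forall>j. f (e j) = e j \<longrightarrow> transvection v (e j) = e j"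
    using exists_transvection_to_basis[OF f] by blast
  then show thesis
    using that transvection_in_gen_group by blast
next
  case False
  then have "f (e i) $ i = 1"
    by simp
  then obtain k where k: "k \<noteq> i" "f (e k) \<noteq> e k" "f (e i) $ k = 0"
    using exists_moved_index[OF f moved] by blast
  let ?t = "e i + e k"
  let ?g = "transvection ?t \<circ> f"
  have t: "ip ?t ?t = 0"
    by (simp add: isotropic_add ip_axis_self)
  have g: "?g \<in> orth_group"
    using comp_in_orth_group transvection_in_orth_group[OF t] f by blast
  have "?g (e i) $ i = 0"
    using False k(1,3) bit_not_zero_iff
    by (simp add: transvection_def ip_add_right ip_axis_right axis_component)
  then obtain v where v: "ip v v = 0" "transvection v (?g (e i)) = e i"
    "\<forall>j. ?g (e j) = e j \<longrightarrow> transvection v (e j) = e j"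
    using exists_transvection_to_basis[OF g] by blast
  have t_fixes: "transvection ?t (e j) = e j" if "f (e j) = e j" for j
  proof -
    have "j \<noteq> i" "j \<noteq> k"
      using that moved k(2) by auto
    then show ?thesis
      by (simp add: transvection_orthogonal ip_add_right ip_axis_right axis_component)
  qed
  show thesis
  proof (rule that)
    show "transvection v \<circ> transvection ?t \<in> gen_group R_generators"
      using transvection_in_gen_group[OF v(1)] transvection_in_gen_group[OF t]
      by (rule gen_group.gen_comp)
    show "(transvection v \<circ> transvection ?t) (f (e i)) = e i"
      using v(2) by simp
    show "\<forall>j. f (e j) = e j \<longrightarrow> (transvection v \<circ> transvection ?t) (e j) = e j"
      using v(3) t_fixes by simp
  qed
qed

lemma orth_group_subset_gen_group: "f \<in> orth_group \<Longrightarrow> f \<in> gen_group R_generators"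
proof (induction "card {i. f (e i) \<noteq> e i}" arbitrary: f rule: less_induct)
  case less
  show ?case
  proof (cases "\<forall>j. f (e j) = e j")
    case True
    then have "f = id"
      using orth_group_eq_id[OF less.prems] by blast
    then show ?thesis
      by (simp add: gen_group.gen_id)
  next
    case False
    then obtain i where moved: "f (e i) \<noteq> e i" by blast
    obtain r where r: "r \<in> gen_group R_generators" "r (f (e i)) = e i"
      "\<forall>j. f (e j) = e j \<longrightarrow> r (e j) = e j"
      using exists_gen_group_fixing_basis[OF less.prems moved] by blast
    have r_orth: "r \<in> orth_group"
      using r(1) gen_group_R_generators_subset by blast
    have "{j. (r \<circ> f) (e j) \<noteq> e j} \<subset> {j. f (e j) \<noteq> e j}"
      using r(2,3) moved by auto
    then have "card {j. (r \<circ> f) (e j) \<noteq> e j} < card {j. f (e j) \<noteq> e j}"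
      by (rule psubset_card_mono[OF finite])
    then have "r \<circ> f \<in> gen_group R_generators"
      using less.hyps comp_in_orth_group[OF r_orth less.prems] by blast
    then have "inv r \<circ> (r \<circ> f) \<in> gen_group R_generators"
      using gen_group.gen_comp gen_group.gen_inv r(1) by blast
    moreover have "inv r \<circ> (r \<circ> f) = f"
      using r_orth unfolding orth_group_def by (simp add: fun_eq_iff bij_is_inj)
    ultimately show ?thesis by simp
  qed
qed

theorem theorem5p1:
  shows "(\<forall>S::'n::finite set. S \<noteq> {} \<and> even (card S) \<longrightarrow>
            R_map S \<in> orth_group \<and> R_map S \<circ> R_map S = id)
       \<and> (orth_group :: (bit ^ 'n \<Rightarrow> bit ^ 'n) set)
           = gen_group {R_map S | S::'n set. S \<noteq> {} \<and> even (card S)}"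
  using R_map_in_orth_group R_map_involution
    orth_group_subset_gen_group gen_group_R_generators_subset by blast

end
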